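(* Let $X\subseteq\mathbb{N}$ be finite, $\omega^{n+1}$-large and exp-sparse, and let $c\in\mathbb{N}$ with $4^c\le\min X$. Then: (1) for any finite $W\subseteq\mathbb{N}$ with $|W|\le c$ and $\max W<\min X$, and any colouring $P:[W\cup X]^2\to2$, there exists an $\omega^n$-large $Y\subseteq X$ such that $P(w,y)=P(w,y')$ for all $w\in W$ and $y,y'\in Y$; (2) for any finite $W\subseteq\mathbb{N}$ with $|W|\le c$ and $\max X<\min W$, and any colouring $P:[X\cup W]^2\to2$, there exists an $\omega^n$-large $Y\subseteq X$ such that $P(y,w)=P(y',w)$ for all $w\in W$ and $y,y'\in Y$.
   Context: Ordinals below $\omega^\omega$ are in Cantor normal form; $\omega^j\cdot m$ = sum of $m$ copies of $\omega^j$. For $m\in\mathbb{N}$: $0[m]=0$, $(\beta+1)[m]=\beta$, $(\beta+\omega^{n})[m]=\beta+\omega^{n-1}\cdot m$ for $n\ge1$. A finite $X=\{x_0<\dots<x_{\ell-1}\}\subseteq\mathbb{N}$ is $\alpha$-large if $\alpha[x_0]\cdots[x_{\ell-1}]=0$. A set $X$ with $\min X\ge3$ is exp-sparse if $x<y$ in $X$ implies $4^x<y$. Pairs in $[Z]^2$ are written $(x,y)$ with $x<y$. *)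

theory Defs
  imports Main
begin

text \<open>Ordinals below omega^omega in Cantor normal form, represented by the
  list of exponents [e1, ..., ek] (nonincreasing), standing for
  omega^e1 + ... + omega^ek.  The empty list is 0.\<close>

type_synonym cnf = "nat list"

definition cnf_ok :: "cnf \<Rightarrow> bool" where
  "cnf_ok a \<longleftrightarrow> sorted (rev a)"

definition omega_pow :: "nat \<Rightarrow> cnf" where
  "omega_pow n = [n]"

text \<open>Fundamental sequence: 0[m] = 0, (b+1)[m] = b,
  (b + omega^n)[m] = b + omega^(n-1) * m for n >= 1.\<close>
definition fs :: "cnf \<Rightarrow> nat \<Rightarrow> cnf" where
  "fs a m = (if a = [] then []
             else if last a = 0 then butlast a
             else butlast a @ replicate m (last a - 1))"

definition large :: "cnf \<Rightarrow> nat set \<Rightarrow> bool" where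
  "large a X \<longleftrightarrow> finite X \<and> foldl fs a (sorted_list_of_set X) = []"

definition exp_sparse :: "nat set \<Rightarrow> bool" where
  "exp_sparse X \<longleftrightarrow> (\<forall>x\<in>X. 3 \<le> x) \<and> (\<forall>x\<in>X. \<forall>y\<in>X. x < y \<longrightarrow> 4 ^ x < y)"

end

theory Submission
  imports Defs "HOL-Library.Multiset_Order"
begin

(* Ordinals below omega^omega are represented by multisets of exponents, so that the ordinal
  order becomes the multiset order and the natural sum becomes multiset union. Two facts about
  fundamental sequences drive the argument: largeness of a set survives replacing alpha by
  alpha[s] for any s below the set, and the Bachmann property says that beta < alpha implies
  beta <= alpha[y] whenever all coefficients of beta are below y. Together they make largeness
  monotone in alpha, and this yields a pigeonhole principle on sparse sets: if the natural sum
  of alpha_1, ..., alpha_k is large on a set coloured with k colours, then some alpha_i is large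
  on its colour class, because each element can be charged to the summand of its own colour.

  If X is omega^(n+1)-large with least element x0, then X - {x0} is (omega^n * x0)-large.
  Colour y by the set of all w in W with P(w,y) (resp. P(y,w)). There are at most
  2^c <= x0 colours, so X - {x0} is large for the natural sum of one omega^n per colour, and
  the pigeonhole principle yields an omega^n-large colour class. *)

lemma less_multiset_of_top_difference:
  fixes A B :: "'a::linorder multiset"
  assumes "count A w < count B w" and "\<And>z. w < z \<Longrightarrow> count A z = count B z"
  shows "A < B"
  unfolding less_multiset\<^sub>H\<^sub>O
proof (intro conjI allI impI)
  show "A \<noteq> B" using assms(1) by auto
next
  fix y assume "count B y < count A y"
  then have "y < w" using assms by (metis less_asym linorder_neqE)
  then show "\<exists>x>y. count A x < count B x" using assms(1) by blast
qed

lemma top_difference_of_less_multiset: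
  fixes A B :: "'a::linorder multiset"
  assumes "A < B"
  obtains w where "count A w < count B w" and "\<And>z. w < z \<Longrightarrow> count A z = count B z"
proof -
  define \<Delta> where "\<Delta> = {z. count A z \<noteq> count B z}"
  have "\<Delta> \<subseteq> set_mset A \<union> set_mset B"
    by (auto simp: \<Delta>_def not_in_iff)
  then have fin: "finite \<Delta>"
    by (rule finite_subset) simp
  have "\<Delta> \<noteq> {}"
  proof
    assume "\<Delta> = {}"
    then have "A = B" by (intro multiset_eqI) (auto simp: \<Delta>_def)
    then show False using assms by simp
  qed
  define w where "w = Max \<Delta>"
  have "w \<in> \<Delta>" using fin \<open>\<Delta> \<noteq> {}\<close> by (simp add: w_def)
  then have differ: "count A w \<noteq> count B w" by (simp add: \<Delta>_def)
  have above: "count A z = count B z" if "w < z" for z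
  proof (rule ccontr)
    assume "count A z \<noteq> count B z"
    then have "z \<le> w" unfolding w_def using fin by (intro Max_ge) (simp_all add: \<Delta>_def)
    then show False using that by simp
  qed
  have "\<not> count B w < count A w"
  proof
    assume "count B w < count A w"
    then obtain x where "w < x" and "count A x < count B x"
      using assms unfolding less_multiset\<^sub>H\<^sub>O by blast
    then show False using above by fastforce
  qed
  then have "count A w < count B w" using differ by simp
  then show ?thesis using above by (rule that)
qed

definition least_exp :: "nat multiset \<Rightarrow> nat" where
  "least_exp M = Min (set_mset M)"

definition fs_mset :: "nat multiset \<Rightarrow> nat \<Rightarrow> nat multiset" where
  "fs_mset M y = (if M = {#} then {#} else M - {#least_exp M#} +
      (if least_exp M = 0 then {#} else replicate_mset y (least_exp M - 1)))"

definition large_seq :: "nat multiset \<Rightarrow> nat list \<Rightarrow> bool" where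
  "large_seq M xs \<longleftrightarrow> foldl fs_mset M xs = {#}"

lemma least_exp_in: "M \<noteq> {#} \<Longrightarrow> least_exp M \<in># M"
  unfolding least_exp_def by simp

lemma least_exp_le: "z \<in># M \<Longrightarrow> least_exp M \<le> z"
  unfolding least_exp_def by simp

lemma count_below_least_exp: "z < least_exp M \<Longrightarrow> count M z = 0"
  using least_exp_le[of z M] by (meson count_inI not_le)

lemma fs_mset_empty [simp]: "fs_mset {#} y = {#}"
  by (simp add: fs_mset_def)

lemma count_fs_mset:
  assumes "M \<noteq> {#}"
  shows "count (fs_mset M y) z = count M z - (if z = least_exp M then 1 else 0)
     + (if 0 < least_exp M \<and> z = least_exp M - 1 then y else 0)"
  using assms by (auto simp: fs_mset_def)

lemma count_fs_mset_above: "least_exp M < z \<Longrightarrow> count (fs_mset M y) z = count M z"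
  by (cases "M = {#}") (auto simp: count_fs_mset)

lemma count_fs_mset_least: "count (fs_mset M y) (least_exp M) = count M (least_exp M) - 1"
  by (cases "M = {#}") (auto simp: count_fs_mset)

lemma count_fs_mset_pred:
  "M \<noteq> {#} \<Longrightarrow> 0 < least_exp M \<Longrightarrow> count (fs_mset M y) (least_exp M - 1) = y"
  using count_below_least_exp[of "least_exp M - 1" M] by (simp add: count_fs_mset)

lemma in_fs_mset: "x \<in># fs_mset M y \<Longrightarrow> x \<in># M \<or> x = least_exp M - 1"
  by (auto simp: fs_mset_def split: if_splits dest: in_diffD)

lemma large_seq_Nil [simp]: "large_seq M [] \<longleftrightarrow> M = {#}"
  by (simp add: large_seq_def)

lemma large_seq_Cons [simp]: "large_seq M (y # ys) \<longleftrightarrow> large_seq (fs_mset M y) ys"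
  by (simp add: large_seq_def)

lemma large_seq_empty [simp]: "large_seq {#} xs"
  by (induction xs) auto

lemma fs_mset_add_below:
  assumes "D \<noteq> {#}" and "\<forall>d\<in>#D. \<forall>k\<in>#K. d \<le> k"
  shows "fs_mset (K + D) y = K + fs_mset D y"
proof -
  have "least_exp (K + D) = least_exp D"
    unfolding least_exp_def[of "K + D"]
  proof (rule Min_eqI)
    show "least_exp D \<in> set_mset (K + D)" using least_exp_in[OF assms(1)] by simp
    fix z assume "z \<in> set_mset (K + D)"
    then show "least_exp D \<le> z"
      using assms(2) least_exp_in[OF assms(1)] least_exp_le[of z D] by auto
  qed simp
  moreover have "K + D - {#least_exp D#} = K + (D - {#least_exp D#})"
    using least_exp_in[OF assms(1)] by (intro multiset_diff_union_assoc) simp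
  ultimately show ?thesis
    using assms(1) by (simp add: fs_mset_def)
qed

lemma fs_mset_split:
  assumes "s \<le> x"
  obtains D where "fs_mset M x = fs_mset M s + D" and "\<forall>d\<in>#D. \<forall>k\<in>#fs_mset M s. d \<le> k"
proof (cases "M = {#} \<or> least_exp M = 0")
  case True
  then have "fs_mset M x = fs_mset M s + {#}" by (auto simp: fs_mset_def)
  then show ?thesis by (rule that) simp
next
  case False
  let ?D = "replicate_mset (x - s) (least_exp M - 1)"
  have "fs_mset M x = fs_mset M s + ?D"
    using False assms by (intro multiset_eqI) (simp add: fs_mset_def)
  moreover have "\<forall>d\<in>#?D. \<forall>k\<in>#fs_mset M s. d \<le> k"
  proof (intro ballI)
    fix d k assume "d \<in># ?D" and "k \<in># fs_mset M s"
    then show "d \<le> k" using in_fs_mset[of k M s] least_exp_le[of k M] by (auto split: if_splits)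
  qed
  ultimately show ?thesis by (rule that)
qed

lemma fs_mset_below:
  assumes "\<forall>d\<in>#D. \<forall>k\<in>#K. d \<le> k"
  shows "\<forall>d\<in>#fs_mset D y. \<forall>k\<in>#K. d \<le> k"
proof (intro ballI)
  fix d k assume d: "d \<in># fs_mset D y" and k: "k \<in># K"
  then have "D \<noteq> {#}" by auto
  then have "least_exp D \<le> k" using assms least_exp_in k by blast
  then show "d \<le> k" using in_fs_mset[OF d] assms k by auto
qed

(* The lower part D makes the induction go through, since alpha[x] = alpha[s] + D' with D'
  below alpha[s] (fs_mset_split). *)
lemma large_seq_fs_mset_of_add_below:
  assumes "large_seq (K + D) xs" and "sorted_wrt (<) xs" and "\<forall>x\<in>set xs. s < x"
    and "\<forall>d\<in>#D. \<forall>k\<in>#K. d \<le> k"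
  shows "large_seq (fs_mset K s) xs"
  using assms
proof (induction xs arbitrary: K D s)
  case Nil
  then show ?case by simp
next
  case (Cons x zs)
  have zs: "sorted_wrt (<) zs" "\<forall>z\<in>set zs. x < z" using Cons.prems(2) by simp_all
  have "large_seq (fs_mset K x) zs"
  proof (cases "D = {#}")
    case True
    then show ?thesis using Cons.prems(1) by simp
  next
    case False
    have "large_seq (K + fs_mset D x) zs"
      using Cons.prems(1) fs_mset_add_below[OF False Cons.prems(4)] by simp
    then show ?thesis using Cons.IH zs fs_mset_below[OF Cons.prems(4)] by blast
  qed
  moreover obtain D' where "fs_mset K x = fs_mset K s + D'"
    and "\<forall>d\<in>#D'. \<forall>k\<in>#fs_mset K s. d \<le> k"
    using fs_mset_split[of s x K] Cons.prems(3) by auto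
  ultimately have "large_seq (fs_mset (fs_mset K s) x) zs" using Cons.IH zs by metis
  then show ?case by simp
qed

lemma large_seq_fs_mset:
  "large_seq M xs \<Longrightarrow> sorted_wrt (<) xs \<Longrightarrow> \<forall>x\<in>set xs. s < x \<Longrightarrow> large_seq (fs_mset M s) xs"
  using large_seq_fs_mset_of_add_below[of M "{#}"] by simp

lemma fs_mset_bachmann:
  assumes "\<beta> < \<alpha>" and small: "\<And>e. count \<beta> e < y"
  shows "\<beta> \<le> fs_mset \<alpha> y"
proof -
  have "\<alpha> \<noteq> {#}" using assms(1) by auto
  define m where "m = least_exp \<alpha>"
  define \<gamma> where "\<gamma> = fs_mset \<alpha> y"
  have \<gamma>_above: "count \<gamma> z = count \<alpha> z" if "m < z" for z
    using that by (simp add: \<gamma>_def m_def count_fs_mset_above)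
  have \<gamma>_at: "count \<gamma> m = count \<alpha> m - 1"
    by (simp add: \<gamma>_def m_def count_fs_mset_least)
  have \<gamma>_below: "count \<gamma> (m - 1) = y" if "0 < m"
    using count_fs_mset_pred[OF \<open>\<alpha> \<noteq> {#}\<close>] that by (simp add: \<gamma>_def m_def)
  obtain w where w_less: "count \<beta> w < count \<alpha> w"
    and w_above: "\<And>z. w < z \<Longrightarrow> count \<beta> z = count \<alpha> z"
    using top_difference_of_less_multiset[OF assms(1)] by blast
  have "m \<le> w" using w_less count_below_least_exp[of w \<alpha>] by (fastforce simp: m_def)
  consider "m < w" | "w = m" "count \<beta> m < count \<gamma> m" | "w = m" "count \<beta> m = count \<gamma> m"
    using \<open>m \<le> w\<close> w_less \<gamma>_at by fastforce
  then have "\<beta> < \<gamma> \<or> \<beta> = \<gamma>"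
  proof cases
    case 1
    then have "\<beta> < \<gamma>"
      using w_less w_above \<gamma>_above by (intro less_multiset_of_top_difference[where w = w]) auto
    then show ?thesis ..
  next
    case 2
    then have "\<beta> < \<gamma>"
      using w_above \<gamma>_above by (intro less_multiset_of_top_difference[where w = m]) auto
    then show ?thesis ..
  next
    case 3
    then have agree: "count \<beta> z = count \<gamma> z" if "m \<le> z" for z
      using that w_above \<gamma>_above by (cases "z = m") auto
    show ?thesis
    proof (cases "m = 0")
      case True
      then show ?thesis using agree by (simp add: multiset_eqI)
    next
      case False
      then have "count \<beta> (m - 1) < count \<gamma> (m - 1)" using small \<gamma>_below by simp
      moreover have "count \<beta> z = count \<gamma> z" if "m - 1 < z" for z
        using that agree by simp
      ultimately show ?thesis by (simp add: less_multiset_of_top_difference)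
    qed
  qed
  then show ?thesis by (auto simp: \<gamma>_def)
qed

lemma large_seq_mono:
  assumes "large_seq \<alpha> xs" and "\<beta> \<le> \<alpha>" and "sorted_wrt (<) xs"
    and "\<forall>x\<in>set xs. \<forall>e. count \<beta> e < x"
  shows "large_seq \<beta> xs"
  using assms
proof (induction xs arbitrary: \<alpha>)
  case Nil
  then show ?case using less_eq_multiset_empty_right by auto
next
  case (Cons y ys)
  show ?case
  proof (cases "\<beta> = \<alpha>")
    case True
    then show ?thesis using Cons.prems(1) by simp
  next
    case False
    then have "\<beta> \<le> fs_mset \<alpha> y" using Cons.prems(2,4) fs_mset_bachmann by simp
    then have "large_seq \<beta> ys" using Cons.IH Cons.prems by simp
    then show ?thesis using large_seq_fs_mset Cons.prems(3) by simp
  qed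
qed

lemma add_fs_mset_le:
  assumes "A \<noteq> {#}"
  shows "S + fs_mset A y \<le> fs_mset (S + A) y"
proof -
  define e where "e = least_exp A"
  define m where "m = least_exp (S + A)"
  have "S + A \<noteq> {#}" and "0 < count A e"
    using assms least_exp_in[OF assms] by (auto simp: e_def)
  have "m \<le> e" using least_exp_in[OF assms] least_exp_le[of e "S + A"] by (simp add: e_def m_def)
  have count_left: "count (S + fs_mset A y) z
      = count S z + count A z - (if z = e then 1 else 0) + (if 0 < e \<and> z = e - 1 then y else 0)" for z
    using count_fs_mset[OF assms] \<open>0 < count A e\<close> by (auto simp: e_def)
  have count_right: "count (fs_mset (S + A) y) z
      = count S z + count A z - (if z = m then 1 else 0) + (if 0 < m \<and> z = m - 1 then y else 0)" for z
    using count_fs_mset[OF \<open>S + A \<noteq> {#}\<close>] by (simp add: m_def)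
  show ?thesis
  proof (cases "m = e")
    case True
    then have "S + fs_mset A y = fs_mset (S + A) y"
      by (intro multiset_eqI) (simp only: count_left count_right)
    then show ?thesis by simp
  next
    case False
    with \<open>m \<le> e\<close> have "m < e" by simp
    have "S + fs_mset A y < fs_mset (S + A) y"
    proof (rule less_multiset_of_top_difference)
      show "count (S + fs_mset A y) e < count (fs_mset (S + A) y) e"
        using \<open>m < e\<close> \<open>0 < count A e\<close> by (simp only: count_left count_right) auto
      show "count (S + fs_mset A y) z = count (fs_mset (S + A) y) z" if "e < z" for z
        using \<open>m < e\<close> that by (simp only: count_left count_right) auto
    qed
    then show ?thesis by simp
  qed
qed

lemma sum_fs_mset_update_le:
  assumes "finite I" and "j \<in> I" and "\<alpha> j \<noteq> {#}"
  shows "(\<Sum>i\<in>I. (\<alpha>(j := fs_mset (\<alpha> j) y)) i) \<le> fs_mset (\<Sum>i\<in>I. \<alpha> i) y"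
proof -
  let ?\<alpha>' = "\<alpha>(j := fs_mset (\<alpha> j) y)" and ?S = "\<Sum>i\<in>I - {j}. \<alpha> i"
  have rest: "(\<Sum>i\<in>I - {j}. ?\<alpha>' i) = ?S"
    by (rule sum.cong) auto
  have "(\<Sum>i\<in>I. ?\<alpha>' i) = ?S + fs_mset (\<alpha> j) y"
    unfolding sum.remove[OF assms(1,2)] rest by (simp add: add.commute)
  also have "\<dots> \<le> fs_mset (?S + \<alpha> j) y"
    using assms(3) by (rule add_fs_mset_le)
  also have "?S + \<alpha> j = (\<Sum>i\<in>I. \<alpha> i)"
    unfolding sum.remove[OF assms(1,2)] by (simp add: add.commute)
  finally show ?thesis .
qed

lemma count_fs_mset_le:
  assumes "\<And>e. count M e \<le> y"
  shows "count (fs_mset M y) e \<le> y"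
proof (cases "M = {#}")
  case True
  then show ?thesis by simp
next
  case False
  have "count M (least_exp M - 1) = 0" if "0 < least_exp M"
    using that by (intro count_below_least_exp) simp
  then show ?thesis using assms[of e] count_fs_mset[OF False, of y e] by auto
qed

lemma large_seq_sum_update:
  assumes "finite I" and "j \<in> I" and "\<alpha> j \<noteq> {#}"
    and "large_seq (\<Sum>i\<in>I. \<alpha> i) (y # ys)" and "sorted_wrt (<) (y # ys)"
    and small: "\<And>i e. i \<in> I \<Longrightarrow> count (\<alpha> i) e \<le> y"
    and sparse: "\<forall>x\<in>set ys. card I * y < x"
  shows "large_seq (\<Sum>i\<in>I. (\<alpha>(j := fs_mset (\<alpha> j) y)) i) ys"
proof (rule large_seq_mono)
  show "large_seq (fs_mset (\<Sum>i\<in>I. \<alpha> i) y) ys" using assms(4) by simp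
  show "(\<Sum>i\<in>I. (\<alpha>(j := fs_mset (\<alpha> j) y)) i) \<le> fs_mset (\<Sum>i\<in>I. \<alpha> i) y"
    using assms(1-3) by (rule sum_fs_mset_update_le)
  show "sorted_wrt (<) ys" using assms(5) by simp
  show "\<forall>x\<in>set ys. \<forall>e. count (\<Sum>i\<in>I. (\<alpha>(j := fs_mset (\<alpha> j) y)) i) e < x"
  proof (intro ballI allI)
    fix x e assume "x \<in> set ys"
    have "count ((\<alpha>(j := fs_mset (\<alpha> j) y)) i) e \<le> y" if "i \<in> I" for i
      using small that count_fs_mset_le[OF small[OF assms(2)]] by simp
    then have "(\<Sum>i\<in>I. count ((\<alpha>(j := fs_mset (\<alpha> j) y)) i) e) \<le> card I * y"
      using sum_bounded_above[of I _ y] by simp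
    also have "\<dots> < x" using sparse \<open>x \<in> set ys\<close> by simp
    finally show "count (\<Sum>i\<in>I. (\<alpha>(j := fs_mset (\<alpha> j) y)) i) e < x"
      by (simp add: count_sum)
  qed
qed

lemma large_seq_sum_pigeonhole:
  fixes colour :: "nat \<Rightarrow> 'c" and \<alpha> :: "'c \<Rightarrow> nat multiset"
  assumes "finite I" and "I \<noteq> {}"
    and "large_seq (\<Sum>i\<in>I. \<alpha> i) xs" and "sorted_wrt (<) xs" and "colour ` set xs \<subseteq> I"
    and "\<forall>x\<in>set xs. \<forall>z\<in>set xs. x < z \<longrightarrow> card I * x < z"
    and "\<forall>i\<in>I. \<forall>e. \<forall>x\<in>set xs. count (\<alpha> i) e \<le> x"
  shows "\<exists>i\<in>I. large_seq (\<alpha> i) (filter (\<lambda>x. colour x = i) xs)"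
  using assms(3-)
proof (induction xs arbitrary: \<alpha>)
  case Nil
  then have "\<forall>i\<in>I. \<alpha> i = {#}" using sum_eq_empty_iff[OF assms(1), of \<alpha>] by simp
  then show ?case using assms(2) by auto
next
  case (Cons y ys)
  show ?case
  proof (cases "\<exists>i\<in>I. \<alpha> i = {#}")
    case True
    then obtain i where "i \<in> I" and "\<alpha> i = {#}" by blast
    then show ?thesis by (intro bexI[of _ i]) auto
  next
    case False
    define j where "j = colour y"
    define \<alpha>' where "\<alpha>' = \<alpha>(j := fs_mset (\<alpha> j) y)"
    have "j \<in> I" using Cons.prems(3) by (simp add: j_def)
    have small: "count (\<alpha> i) e \<le> y" if "i \<in> I" for i e
      using Cons.prems(5) that by simp
    have "large_seq (\<Sum>i\<in>I. \<alpha>' i) ys"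
      unfolding \<alpha>'_def using False \<open>j \<in> I\<close> Cons.prems(1,2,4) small
      by (intro large_seq_sum_update[OF assms(1)]) auto
    moreover have "\<forall>i\<in>I. \<forall>e. \<forall>x\<in>set ys. count (\<alpha>' i) e \<le> x"
    proof (intro ballI allI)
      fix i e x assume "i \<in> I" and "x \<in> set ys"
      then have "count (\<alpha>' i) e \<le> y" and "y < x"
        using small count_fs_mset_le[OF small] Cons.prems(2) by (auto simp: \<alpha>'_def)
      then show "count (\<alpha>' i) e \<le> x" by simp
    qed
    moreover have "sorted_wrt (<) ys" and "colour ` set ys \<subseteq> I"
      and "\<forall>x\<in>set ys. \<forall>z\<in>set ys. x < z \<longrightarrow> card I * x < z"
      using Cons.prems(2-4) by auto
    ultimately obtain i where "i \<in> I" and large_i: "large_seq (\<alpha>' i) (filter (\<lambda>x. colour x = i) ys)"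
      using Cons.IH by blast
    have "large_seq (\<alpha> i) (filter (\<lambda>x. colour x = i) (y # ys))"
      using large_i by (cases "i = j") (simp_all add: \<alpha>'_def j_def)
    then show ?thesis using \<open>i \<in> I\<close> by blast
  qed
qed

lemma mset_fs:
  assumes "sorted (rev a)"
  shows "mset (fs a y) = fs_mset (mset a) y" and "sorted (rev (fs a y))"
proof -
  have "mset (fs a y) = fs_mset (mset a) y \<and> sorted (rev (fs a y))"
  proof (cases a rule: rev_exhaust)
    case Nil
    then show ?thesis by (simp add: fs_def)
  next
    case (snoc a' l)
    then have above: "\<forall>z\<in>set a'. l \<le> z" and "sorted (rev a')" using assms by simp_all
    have "least_exp (mset a) = l"
      unfolding least_exp_def snoc using above by (intro Min_eqI) auto
    moreover have "sorted (rev (a' @ replicate y (l - 1)))"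
      using \<open>sorted (rev a')\<close> above by (auto simp: sorted_append)
    ultimately show ?thesis
      using snoc \<open>sorted (rev a')\<close> by (simp add: fs_def fs_mset_def)
  qed
  then show "mset (fs a y) = fs_mset (mset a) y" and "sorted (rev (fs a y))" by simp_all
qed

lemma mset_foldl_fs: "sorted (rev a) \<Longrightarrow> mset (foldl fs a xs) = foldl fs_mset (mset a) xs"
  by (induction xs arbitrary: a) (simp_all add: mset_fs)

lemma large_iff_large_seq:
  assumes "sorted (rev a)" and "finite X"
  shows "large a X \<longleftrightarrow> large_seq (mset a) (sorted_list_of_set X)"
  using mset_foldl_fs[OF assms(1)] assms(2) unfolding large_def large_seq_def
  by (metis mset_zero_iff)

lemma large_set_iff_large_seq:
  assumes "sorted (rev a)" and "sorted_wrt (<) xs"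
  shows "large a (set xs) \<longleftrightarrow> large_seq (mset a) xs"
proof -
  have "sorted_list_of_set (set xs) = xs"
    using assms(2) by (intro strict_sorted_equal) simp_all
  then show ?thesis using large_iff_large_seq[OF assms(1)] by (metis List.finite_set)
qed

lemma large_seq_tail_of_large_omega_pow_Suc:
  assumes "large (omega_pow (Suc n)) X"
  shows "large_seq (replicate_mset (Min X) n) (sorted_list_of_set (X - {Min X}))"
proof -
  have "finite X" using assms by (simp add: large_def)
  moreover have "X \<noteq> {}" using assms by (auto simp: large_def omega_pow_def)
  ultimately have "large_seq {#Suc n#} (Min X # sorted_list_of_set (X - {Min X}))"
    using assms large_iff_large_seq[of "omega_pow (Suc n)" X] sorted_list_of_set_nonempty[of X]
    by (simp add: omega_pow_def)
  then show ?thesis by (simp add: fs_mset_def least_exp_def)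
qed

lemma exp_sparse_mult_less:
  assumes "exp_sparse X" and "x \<in> X" and "z \<in> X" and "x < z" and "k \<le> x"
  shows "k * x < z"
proof -
  have "k * x \<le> x * x" using assms(5) by simp
  also have "\<dots> < 2 ^ x * 2 ^ x" by (simp add: mult_strict_mono)
  also have "\<dots> = 4 ^ x" by (simp flip: power_mult_distrib)
  also have "\<dots> < z" using assms(1-4) unfolding exp_sparse_def by blast
  finally show ?thesis .
qed

lemma large_omega_pow_Suc_monochromatic:
  fixes colour :: "nat \<Rightarrow> 'c"
  assumes large: "large (omega_pow (Suc n)) X" and sparse: "exp_sparse X"
    and few_colours: "card (colour ` X) \<le> Min X"
  shows "\<exists>Y\<subseteq>X. large (omega_pow n) Y \<and> (\<forall>y\<in>Y. \<forall>y'\<in>Y. colour y = colour y')"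
proof -
  have "finite X" and "X \<noteq> {}" using large by (auto simp: large_def omega_pow_def)
  define x0 where "x0 = Min X"
  define ys where "ys = sorted_list_of_set (X - {x0})"
  have ys: "sorted_wrt (<) ys" "\<forall>x\<in>set ys. x0 < x" "set ys \<subseteq> X"
    using \<open>finite X\<close> by (auto simp: ys_def x0_def less_le)
  have "large_seq (replicate_mset x0 n) ys"
    unfolding x0_def ys_def using large by (rule large_seq_tail_of_large_omega_pow_Suc)
  define I where "I = colour ` X"
  have "finite I" "I \<noteq> {}" "card I \<le> x0"
    using \<open>finite X\<close> \<open>X \<noteq> {}\<close> few_colours \<open>x0 = Min X\<close> by (simp_all add: I_def)
  have sum_I: "(\<Sum>i\<in>I. {#n#}) = replicate_mset (card I) n"
    using \<open>finite I\<close> by (induction I rule: finite_induct) auto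
  have "(\<Sum>i\<in>I. {#n#}) \<le> replicate_mset x0 n"
    unfolding sum_I using \<open>card I \<le> x0\<close>
    by (intro subset_eq_imp_le_multiset) (simp add: subseteq_mset_def)
  moreover have "\<forall>x\<in>set ys. \<forall>e. count (\<Sum>i\<in>I. {#n#}) e < x"
    unfolding sum_I using \<open>card I \<le> x0\<close> ys(2) by fastforce
  ultimately have large_sum: "large_seq (\<Sum>i\<in>I. {#n#}) ys"
    using large_seq_mono \<open>large_seq (replicate_mset x0 n) ys\<close> ys(1) by blast
  have colours: "colour ` set ys \<subseteq> I" using ys(3) by (auto simp: I_def)
  have "card I * x < z" if "x \<in> set ys" and "z \<in> set ys" and "x < z" for x z
    using that ys(2,3) \<open>card I \<le> x0\<close> by (intro exp_sparse_mult_less[OF sparse]) auto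
  then have sparse_ys: "\<forall>x\<in>set ys. \<forall>z\<in>set ys. x < z \<longrightarrow> card I * x < z" by blast
  have small: "\<forall>i\<in>I. \<forall>e. \<forall>x\<in>set ys. count {#n#} e \<le> x"
    using ys(2) by auto
  obtain i where large_i: "large_seq {#n#} (filter (\<lambda>x. colour x = i) ys)"
    using large_seq_sum_pigeonhole[OF \<open>finite I\<close> \<open>I \<noteq> {}\<close> large_sum ys(1) colours sparse_ys small]
    by blast
  define Y where "Y = set (filter (\<lambda>x. colour x = i) ys)"
  have "large (omega_pow n) Y"
    using large_set_iff_large_seq[of "omega_pow n" "filter (\<lambda>x. colour x = i) ys"] large_i ys(1)
    by (simp add: Y_def omega_pow_def sorted_wrt_filter)
  moreover have "Y \<subseteq> X" using ys(3) by (auto simp: Y_def)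
  ultimately show ?thesis by (auto simp: Y_def)
qed

lemma large_omega_pow_Suc_homogeneous:
  fixes Q :: "nat \<Rightarrow> nat \<Rightarrow> bool"
  assumes "large (omega_pow (Suc n)) X" and "exp_sparse X" and "4 ^ c \<le> Min X"
    and "finite W" and "card W \<le> c"
  shows "\<exists>Y\<subseteq>X. large (omega_pow n) Y \<and> (\<forall>w\<in>W. \<forall>y\<in>Y. \<forall>y'\<in>Y. Q y w = Q y' w)"
proof -
  let ?colour = "\<lambda>y. {w\<in>W. Q y w}"
  have "card (?colour ` X) \<le> card (Pow W)"
    using \<open>finite W\<close> by (intro card_mono) auto
  also have "\<dots> \<le> 2 ^ c"
    using \<open>finite W\<close> \<open>card W \<le> c\<close> by (simp add: card_Pow)
  also have "\<dots> \<le> 4 ^ c"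
    by (simp add: power_mono)
  finally have few_colours: "card (?colour ` X) \<le> Min X"
    using \<open>4 ^ c \<le> Min X\<close> by linarith
  obtain Y where "Y \<subseteq> X" and "large (omega_pow n) Y"
    and same_colour: "\<forall>y\<in>Y. \<forall>y'\<in>Y. ?colour y = ?colour y'"
    using large_omega_pow_Suc_monochromatic[OF assms(1,2) few_colours] by blast
  show ?thesis
  proof (intro exI[of _ Y] conjI ballI)
    fix w y y' assume "w \<in> W" and "y \<in> Y" and "y' \<in> Y"
    then have "?colour y = ?colour y'" using same_colour by blast
    then have "w \<in> ?colour y \<longleftrightarrow> w \<in> ?colour y'" by (simp only:)
    then show "Q y w = Q y' w" using \<open>w \<in> W\<close> by simp
  qed fact+
qed

theorem lemma2p5:
  fixes X :: "nat set" and n c :: nat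
  assumes "finite X" and "large (omega_pow (Suc n)) X" and "exp_sparse X"
    and "4 ^ c \<le> Min X"
  shows "(\<forall>(W::nat set) (P::nat \<Rightarrow> nat \<Rightarrow> bool).
            finite W \<and> card W \<le> c \<and> (\<forall>w\<in>W. w < Min X) \<longrightarrow>
            (\<exists>Y \<subseteq> X. large (omega_pow n) Y \<and>
               (\<forall>w\<in>W. \<forall>y\<in>Y. \<forall>y'\<in>Y. P w y = P w y')))
       \<and> (\<forall>(W::nat set) (P::nat \<Rightarrow> nat \<Rightarrow> bool).
            finite W \<and> card W \<le> c \<and> (\<forall>w\<in>W. Max X < w) \<longrightarrow>
            (\<exists>Y \<subseteq> X. large (omega_pow n) Y \<and>
               (\<forall>w\<in>W. \<forall>y\<in>Y. \<forall>y'\<in>Y. P y w = P y' w)))"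
proof (intro conjI allI impI)
  fix W :: "nat set" and P :: "nat \<Rightarrow> nat \<Rightarrow> bool"
  assume "finite W \<and> card W \<le> c \<and> (\<forall>w\<in>W. w < Min X)"
  then show "\<exists>Y \<subseteq> X. large (omega_pow n) Y \<and> (\<forall>w\<in>W. \<forall>y\<in>Y. \<forall>y'\<in>Y. P w y = P w y')"
    using large_omega_pow_Suc_homogeneous[OF assms(2-4), of W "\<lambda>y w. P w y"] by simp
next
  fix W :: "nat set" and P :: "nat \<Rightarrow> nat \<Rightarrow> bool"
  assume "finite W \<and> card W \<le> c \<and> (\<forall>w\<in>W. Max X < w)"
  then show "\<exists>Y \<subseteq> X. large (omega_pow n) Y \<and> (\<forall>w\<in>W. \<forall>y\<in>Y. \<forall>y'\<in>Y. P y w = P y' w)"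
    using large_omega_pow_Suc_homogeneous[OF assms(2-4), of W P] by simp
qed

end
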